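(* Let $p,q$ be positive integers and let $\Phi^*:V^*_{pq}(\mathbb{C})\to\mathbb{C}^{q\times p}$ be the map $\Phi^*\binom{Z_0}{Z_1}=Z_1Z_0^{-1}$, where $Z_0\in\mathbb{C}^{p\times p}$, $Z_1\in\mathbb{C}^{q\times p}$. Then the complex valued components of $\Phi^*$ constitute an orthogonal harmonic family of $\mathbf{GL}_p(\mathbb{C})$-invariant functions on $V^*_{pq}(\mathbb{C})$, equipped with the Euclidean metric.
   Context: $U^*_{pq}(\mathbb{C})=\{\binom{Z_0}{Z_1}\in\mathbb{C}^{(p+q)\times p}: Z_0^*Z_0+Z_1^*Z_1 \text{ invertible}\}$ and $V^*_{pq}(\mathbb{C})=\{\binom{Z_0}{Z_1}\in U^*_{pq}(\mathbb{C}): \det Z_0\neq0\}$. $\mathbf{GL}_p(\mathbb{C})$ acts by right multiplication. The Euclidean metric is $\langle X,Y\rangle=\mathfrak{Re}\,\mathrm{trace}(X^*Y)$. For a Riemannian manifold $(M,g)$ and complex functions $\phi,\psi$, $\tau(\phi)$ is the Laplace–Beltrami operator (extended complex-linearly) and $\kappa(\phi,\psi)=g(\mathrm{grad}\,\phi,\mathrm{grad}\,\psi)$ with $g$ extended complex-bilinearly. A set $\Omega$ of complex functions is an orthogonal harmonic family if $\tau(\phi)=0$ and $\kappa(\phi,\psi)=0$ for all $\phi,\psi\in\Omega$. *)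

theory Defs
  imports "HOL-Analysis.Analysis"
begin

text \<open>Complex matrices: a (p+q) x p matrix is an element of complex^'p^('p+'q)
  (rows indexed by 'p + 'q, columns by 'p).\<close>

definition cnj_transpose :: "complex^'n^'m \<Rightarrow> complex^'m^'n" where
  "cnj_transpose A = (\<chi> i j. cnj (A $ j $ i))"

definition upper_block :: "complex^'p::finite^('p + 'q::finite) \<Rightarrow> complex^'p^'p" where
  "upper_block Z = (\<chi> i j. Z $ Inl i $ j)"

definition lower_block :: "complex^'p::finite^('p + 'q::finite) \<Rightarrow> complex^'p^'q" where
  "lower_block Z = (\<chi> k j. Z $ Inr k $ j)"

definition Ustar :: "(complex^'p::finite^('p + 'q::finite)) set" where
  "Ustar = {Z. invertible (cnj_transpose (upper_block Z) ** upper_block Z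
                          + cnj_transpose (lower_block Z) ** lower_block Z)}"

definition Vstar :: "(complex^'p::finite^('p + 'q::finite)) set" where
  "Vstar = {Z \<in> Ustar. det (upper_block Z) \<noteq> 0}"

definition Phistar :: "complex^'p::finite^('p + 'q::finite) \<Rightarrow> complex^'p^'q" where
  "Phistar Z = lower_block Z ** matrix_inv (upper_block Z)"

text \<open>Calculus on the Euclidean space (the real inner product on complex^'p^('p+'q)
  is Re trace(X* Y)).  Directional derivative of a complex valued function along v.\<close>

definition dirderiv :: "('a::real_normed_vector \<Rightarrow> complex) \<Rightarrow> 'a \<Rightarrow> 'a \<Rightarrow> complex" where
  "dirderiv f v x = vector_derivative (\<lambda>t::real. f (x + t *\<^sub>R v)) (at 0)"

text \<open>Laplace-Beltrami operator of the flat Euclidean metric (complex-linear extension),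
  computed in the orthonormal basis Basis.\<close>
definition tension :: "('a::euclidean_space \<Rightarrow> complex) \<Rightarrow> 'a \<Rightarrow> complex" where
  "tension f x = (\<Sum>b\<in>Basis. dirderiv (\<lambda>y. dirderiv f b y) b x)"

text \<open>kappa(f,g) = g(grad f, grad g), metric extended complex-bilinearly.\<close>
definition conformality :: "('a::euclidean_space \<Rightarrow> complex) \<Rightarrow> ('a \<Rightarrow> complex) \<Rightarrow> 'a \<Rightarrow> complex" where
  "conformality f g x = (\<Sum>b\<in>Basis. dirderiv f b x * dirderiv g b x)"

definition orthogonal_harmonic_family ::
  "'a::euclidean_space set \<Rightarrow> ('a \<Rightarrow> complex) set \<Rightarrow> bool" where
  "orthogonal_harmonic_family M \<Omega> \<longleftrightarrow>
     (\<forall>\<phi>\<in>\<Omega>. \<forall>x\<in>M. tension \<phi> x = 0) \<and>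
     (\<forall>\<phi>\<in>\<Omega>. \<forall>\<psi>\<in>\<Omega>. \<forall>x\<in>M. conformality \<phi> \<psi> x = 0)"

definition GL_invariant :: "(complex^'p::finite^('p + 'q::finite)) set \<Rightarrow> (complex^'p^('p + 'q) \<Rightarrow> complex) \<Rightarrow> bool" where
  "GL_invariant M \<phi> \<longleftrightarrow>
     (\<forall>Z\<in>M. \<forall>g::complex^'p^'p. invertible g \<longrightarrow> Z ** g \<in> M \<and> \<phi> (Z ** g) = \<phi> Z)"

end

theory Submission
  imports Defs "HOL-Complex_Analysis.Cauchy_Integral_Formula"
begin

text \<open>Each entry of \<open>Z\<^sub>1 Z\<^sub>0\<^sup>-\<^sup>1\<close> is holomorphic in every single complex matrix entry
  \<open>w\<close> of \<open>Z\<close> near \<open>w = 0\<close>: affine in the entries of \<open>Z\<^sub>1\<close>, and, by the Sherman-Morrison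
  formula, rational without a pole near \<open>0\<close> in those of \<open>Z\<^sub>0\<close>. If \<open>h w = f (Z + w E)\<close> is
  holomorphic, the real directional derivatives of \<open>f\<close> along \<open>E\<close> and \<open>i E\<close> are \<open>h'\<close> and
  \<open>i h'\<close>, so in the Laplacian and in \<open>\<kappa>\<close> the two real basis vectors \<open>E\<close>, \<open>i E\<close> of each
  entry contribute \<open>(1 + i\<^sup>2) h''\<close> and \<open>(1 + i\<^sup>2) h' k'\<close>, which vanish. Invariance holds
  because \<open>(Z\<^sub>1 g) (Z\<^sub>0 g)\<^sup>-\<^sup>1 = Z\<^sub>1 Z\<^sub>0\<^sup>-\<^sup>1\<close> and the Gram matrix \<open>Z\<^sup>* Z\<close> becomes
  \<open>g\<^sup>* (Z\<^sup>* Z) g\<close>.\<close>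

definition single_entry :: "'a::finite \<Rightarrow> 'b::finite \<Rightarrow> 'c::zero \<Rightarrow> 'c^'b^'a" where
  "single_entry r c w = axis r (axis c w)"

lemma single_entry_nth: "single_entry r c w $ k $ l = (if k = r \<and> l = c then w else 0)"
  by (simp add: single_entry_def axis_def)

lemma linear_single_entry: "linear (single_entry r c :: complex \<Rightarrow> complex^'b::finite^'a::finite)"
  by (rule linearI) (simp_all add: vec_eq_iff single_entry_nth)

lemma single_entry_matrix_mult_nth:
  fixes B :: "'a::semiring_1^'m::finite^'n::finite"
  shows "(single_entry i c w ** B) $ k $ j = (if k = i then w * B$c$j else 0)"
  by (cases "k = i")
    (simp_all add: matrix_matrix_mult_def single_entry_nth if_distrib[of "\<lambda>x. x * _"] cong: if_cong)

lemma linear_of_real_mult: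
  assumes "linear L"
  shows "L (of_real t * u) = t *\<^sub>R L u"
  using linear_cmul[OF assms, of t u] by (simp add: scaleR_conv_of_real)

lemma dirderiv_along_holomorphic_line:
  fixes f :: "'v::real_normed_vector \<Rightarrow> complex"
  assumes L: "linear L" and h: "(\<lambda>w. f (x + L w)) holomorphic_on ball 0 e" and s: "s \<in> ball 0 e"
  shows "dirderiv f (L u) (x + L s) = u * deriv (\<lambda>w. f (x + L w)) s"
proof -
  let ?h = "\<lambda>w. f (x + L w)"
  have "(?h has_field_derivative deriv ?h s) (at s)"
    using h s
    by (meson DERIV_deriv_iff_field_differentiable holomorphic_on_imp_differentiable_at open_ball)
  moreover have "((\<lambda>t::real. s + of_real t * u) has_vector_derivative u) (at 0)"
    by (auto intro!: derivative_eq_intros simp: has_vector_derivative_def scaleR_conv_of_real)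
  ultimately have "((?h \<circ> (\<lambda>t::real. s + of_real t * u)) has_vector_derivative u * deriv ?h s) (at 0)"
    by (intro field_vector_diff_chain_at) simp_all
  moreover have "?h \<circ> (\<lambda>t::real. s + of_real t * u) = (\<lambda>t. f (x + L s + t *\<^sub>R L u))"
    by (simp add: o_def add.assoc linear_add[OF L] linear_of_real_mult[OF L])
  ultimately show ?thesis
    unfolding dirderiv_def by (simp add: vector_derivative_at)
qed

lemma second_dirderiv_along_holomorphic_line:
  fixes f :: "'v::real_normed_vector \<Rightarrow> complex"
  assumes L: "linear L" and h: "(\<lambda>w. f (x + L w)) holomorphic_on ball 0 e" and "e > 0"
  shows "dirderiv (dirderiv f (L u)) (L u) x = u\<^sup>2 * deriv (deriv (\<lambda>w. f (x + L w))) 0"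
proof -
  let ?h = "\<lambda>w. f (x + L w)"
  let ?S = "(\<lambda>t::real. of_real t * u) -` ball 0 e"
  have "(deriv ?h has_field_derivative deriv (deriv ?h) 0) (at 0)"
    using holomorphic_deriv[OF h] \<open>e > 0\<close>
    by (meson DERIV_deriv_iff_field_differentiable holomorphic_on_imp_differentiable_at
        open_ball centre_in_ball)
  moreover have "((\<lambda>t::real. of_real t * u) has_vector_derivative u) (at 0)"
    by (auto intro!: derivative_eq_intros simp: has_vector_derivative_def scaleR_conv_of_real)
  ultimately have "((deriv ?h \<circ> (\<lambda>t::real. of_real t * u)) has_vector_derivative u * deriv (deriv ?h) 0) (at 0)"
    by (intro field_vector_diff_chain_at) simp_all
  from has_vector_derivative_mult_right[OF this, of u]
  have "((\<lambda>t. u * deriv ?h (of_real t * u)) has_vector_derivative u\<^sup>2 * deriv (deriv ?h) 0) (at 0)"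
    by (simp add: o_def power2_eq_square mult.assoc)
  moreover have "open ?S"
    by (intro continuous_open_vimage) (auto intro!: continuous_intros)
  moreover have "0 \<in> ?S"
    using \<open>e > 0\<close> by simp
  moreover have "u * deriv ?h (of_real t * u) = dirderiv f (L u) (x + t *\<^sub>R L u)" if "t \<in> ?S" for t
    using dirderiv_along_holomorphic_line[OF L h, of "of_real t * u" u] that
    by (simp add: linear_of_real_mult[OF L])
  ultimately have "((\<lambda>t. dirderiv f (L u) (x + t *\<^sub>R L u)) has_vector_derivative u\<^sup>2 * deriv (deriv ?h) 0) (at 0)"
    by (rule has_vector_derivative_transform_within_open)
  then show ?thesis
    unfolding dirderiv_def[of "dirderiv f (L u)"] by (simp add: vector_derivative_at)
qed

lemma Basis_matrix:
  "(Basis :: (complex^'b::finite^'a::finite) set)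
     = (\<lambda>(r, c, u). single_entry r c u) ` (UNIV \<times> UNIV \<times> {1, \<i>})"
  by (rule set_eqI) (simp add: Basis_vec_def Basis_complex_def single_entry_def image_iff)

lemma sum_Basis_matrix:
  "(\<Sum>b\<in>(Basis :: (complex^'b::finite^'a::finite) set). F b)
     = (\<Sum>r\<in>UNIV. \<Sum>c\<in>UNIV. F (single_entry r c 1) + F (single_entry r c \<i>))"
proof -
  have "inj_on (\<lambda>(r, c, u). single_entry r c u :: complex^'b^'a) (UNIV \<times> UNIV \<times> {1, \<i>})"
    by (auto simp: inj_on_def single_entry_def axis_eq_axis)
  then have "(\<Sum>b\<in>(Basis :: (complex^'b^'a) set). F b)
      = (\<Sum>(r, c, u)\<in>UNIV \<times> UNIV \<times> {1, \<i>}. F (single_entry r c u))"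
    unfolding Basis_matrix by (subst sum.reindex) (simp_all add: case_prod_beta o_def)
  also have "\<dots> = (\<Sum>r\<in>UNIV. \<Sum>(c, u)\<in>UNIV \<times> {1, \<i>}. F (single_entry r c u))"
    by (subst sum.cartesian_product[symmetric]) (simp add: case_prod_beta)
  also have "\<dots> = (\<Sum>r\<in>UNIV. \<Sum>c\<in>UNIV. \<Sum>u\<in>{1, \<i>}. F (single_entry r c u))"
    by (subst sum.cartesian_product[symmetric]) (simp add: case_prod_beta)
  finally show ?thesis
    by simp
qed

definition holomorphic_along_entries ::
    "(complex^'b::finite^'a::finite \<Rightarrow> complex) \<Rightarrow> complex^'b^'a \<Rightarrow> bool" where
  "holomorphic_along_entries f x \<longleftrightarrow>
     (\<forall>r c. \<exists>e>0. (\<lambda>w. f (x + single_entry r c w)) holomorphic_on ball 0 e)"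

lemma tension_eq_0_if_holomorphic_along_entries:
  assumes "holomorphic_along_entries f x"
  shows "tension f x = 0"
proof -
  have "dirderiv (dirderiv f (single_entry r c 1)) (single_entry r c 1) x
      + dirderiv (dirderiv f (single_entry r c \<i>)) (single_entry r c \<i>) x = 0" for r c
  proof -
    obtain e where "e > 0" and h: "(\<lambda>w. f (x + single_entry r c w)) holomorphic_on ball 0 e"
      using assms unfolding holomorphic_along_entries_def by blast
    show ?thesis
      using second_dirderiv_along_holomorphic_line[OF linear_single_entry h \<open>e > 0\<close>] by simp
  qed
  then show ?thesis
    unfolding tension_def sum_Basis_matrix by simp
qed

lemma conformality_eq_0_if_holomorphic_along_entries:
  assumes "holomorphic_along_entries f x" and "holomorphic_along_entries g x"
  shows "conformality f g x = 0"
proof -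
  have "dirderiv f (single_entry r c 1) x * dirderiv g (single_entry r c 1) x
      + dirderiv f (single_entry r c \<i>) x * dirderiv g (single_entry r c \<i>) x = 0" for r c
  proof -
    note L = linear_single_entry[of r c]
    obtain e where "e > 0" and hf: "(\<lambda>w. f (x + single_entry r c w)) holomorphic_on ball 0 e"
      using assms(1) unfolding holomorphic_along_entries_def by blast
    obtain e' where "e' > 0" and hg: "(\<lambda>w. g (x + single_entry r c w)) holomorphic_on ball 0 e'"
      using assms(2) unfolding holomorphic_along_entries_def by blast
    show ?thesis
      using dirderiv_along_holomorphic_line[OF L hf, of 0] dirderiv_along_holomorphic_line[OF L hg, of 0]
        \<open>e > 0\<close> \<open>e' > 0\<close> linear_0[OF L]
      by (simp add: algebra_simps)
  qed
  then show ?thesis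
    unfolding conformality_def sum_Basis_matrix by simp
qed

lemma matrix_add_rdistrib: "(B + C) ** A = B ** A + C ** A"
  by (vector matrix_matrix_mult_def sum.distrib[symmetric] field_simps)

lemma matrix_inv_right:
  fixes A :: "'a::field^'n::finite^'n"
  assumes "invertible A"
  shows "A ** matrix_inv A = mat 1"
  using someI_ex[OF assms[unfolded invertible_def]] by (simp add: matrix_inv_def)

lemma matrix_inv_left:
  fixes A :: "'a::field^'n::finite^'n"
  assumes "invertible A"
  shows "matrix_inv A ** A = mat 1"
  using someI_ex[OF assms[unfolded invertible_def]] by (simp add: matrix_inv_def)

lemma matrix_inv_eq_right_inverse:
  fixes A B :: "'a::field^'n::finite^'n"
  assumes "A ** B = mat 1"
  shows "matrix_inv A = B"
proof -
  have "invertible A"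
    using assms invertible_right_inverse by blast
  have "matrix_inv A = (matrix_inv A ** A) ** B"
    by (simp add: assms flip: matrix_mul_assoc)
  then show ?thesis
    by (simp add: matrix_inv_left[OF \<open>invertible A\<close>])
qed

lemma matrix_inv_matrix_mult:
  fixes A B :: "'a::field^'n::finite^'n"
  assumes "invertible A" and "invertible B"
  shows "matrix_inv (A ** B) = matrix_inv B ** matrix_inv A"
proof (rule matrix_inv_eq_right_inverse)
  have "(A ** B) ** (matrix_inv B ** matrix_inv A) = A ** (B ** matrix_inv B) ** matrix_inv A"
    by (simp add: matrix_mul_assoc)
  then show "(A ** B) ** (matrix_inv B ** matrix_inv A) = mat 1"
    by (simp add: matrix_inv_right assms)
qed

text \<open>Sherman-Morrison formula for the rank-one perturbation \<open>A + w e\<^sub>i e\<^sub>c\<^sup>T\<close>.\<close>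

lemma matrix_inv_add_single_entry:
  fixes A B :: "'a::field^'n::finite^'n"
  assumes AB: "A ** B = mat 1" and d: "1 + w * B$c$i \<noteq> 0"
  shows "matrix_inv (A + single_entry i c w)
           = (\<chi> l j. B$l$j - w * B$l$i * B$c$j / (1 + w * B$c$i))"
proof (rule matrix_inv_eq_right_inverse)
  let ?d = "1 + w * B$c$i"
  let ?B' = "\<chi> l j. B$l$j - w * B$l$i * B$c$j / ?d"
  have AB_nth: "(\<Sum>l\<in>UNIV. A$a$l * B$l$j) = (if a = j then 1 else 0)" for a j
    using AB by (simp add: vec_eq_iff matrix_matrix_mult_def mat_def)
  have B'_row_c: "w * (B$c$j - w * B$c$i * B$c$j / ?d) = w * B$c$j / ?d" for j
    using d by (simp add: field_simps)
  have "(A ** ?B')$a$j = (if a = j then 1 else 0) - (if a = i then w * B$c$j / ?d else 0)" for a j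
  proof -
    have "A$a$l * ?B'$l$j = A$a$l * B$l$j - (w * B$c$j / ?d) * (A$a$l * B$l$i)" for l
      by (simp add: right_diff_distrib mult_ac)
    then have "(A ** ?B')$a$j = (\<Sum>l\<in>UNIV. A$a$l * B$l$j) - (w * B$c$j / ?d) * (\<Sum>l\<in>UNIV. A$a$l * B$l$i)"
      by (simp add: matrix_matrix_mult_def sum_subtractf sum_distrib_left)
    then show ?thesis
      by (simp add: AB_nth)
  qed
  moreover have "(single_entry i c w ** ?B')$a$j = (if a = i then w * B$c$j / ?d else 0)" for a j
    by (simp add: single_entry_matrix_mult_nth B'_row_c)
  ultimately show "(A + single_entry i c w) ** ?B' = mat 1"
    by (simp add: vec_eq_iff matrix_add_rdistrib mat_def)
qed

lemma norm_lt_inverse_imp_one_plus_mult_neq_0: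
  fixes b w :: "'a::real_normed_field"
  assumes "norm w < 1 / (norm b + 1)"
  shows "1 + w * b \<noteq> 0"
proof
  assume "1 + w * b = 0"
  then have "norm (w * b) = 1"
    by (metis add_eq_0_iff norm_minus_cancel norm_one)
  moreover have "norm w * norm b \<le> norm w * (norm b + 1)"
    by (rule mult_left_mono) simp_all
  moreover have "norm w * (norm b + 1) < 1"
    using assms by (simp add: field_simps add_pos_nonneg)
  ultimately show False
    by (simp add: norm_mult)
qed

lemma upper_block_add_single_entry_Inl:
  "upper_block (x + single_entry (Inl i) c w) = upper_block x + single_entry i c w"
  by (simp add: upper_block_def vec_eq_iff single_entry_nth)

lemma lower_block_add_single_entry_Inl: "lower_block (x + single_entry (Inl i) c w) = lower_block x"
  by (simp add: lower_block_def vec_eq_iff single_entry_nth)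

lemma upper_block_add_single_entry_Inr: "upper_block (x + single_entry (Inr k) c w) = upper_block x"
  by (simp add: upper_block_def vec_eq_iff single_entry_nth)

lemma lower_block_add_single_entry_Inr:
  "lower_block (x + single_entry (Inr k) c w) = lower_block x + single_entry k c w"
  by (simp add: lower_block_def vec_eq_iff single_entry_nth)

lemma holomorphic_along_entries_Phistar:
  fixes x :: "complex^'p::finite^('p + 'q::finite)"
  assumes "det (upper_block x) \<noteq> 0"
  shows "holomorphic_along_entries (\<lambda>Z. Phistar Z $ k $ j) x"
  unfolding holomorphic_along_entries_def
proof (intro allI)
  fix r c
  define B where "B = matrix_inv (upper_block x)"
  have AB: "upper_block x ** B = mat 1"
    using assms matrix_inv_right invertible_det_nz unfolding B_def by blast
  show "\<exists>e>0. (\<lambda>w. Phistar (x + single_entry r c w) $ k $ j) holomorphic_on ball 0 e"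
  proof (cases r)
    case (Inl i)
    define e where "e = 1 / (norm (B$c$i) + 1)"
    have "e > 0"
      unfolding e_def by (simp add: add_nonneg_pos)
    have d: "1 + w * B$c$i \<noteq> 0" if "w \<in> ball 0 e" for w
      using that norm_lt_inverse_imp_one_plus_mult_neq_0 unfolding e_def by simp
    have eq: "Phistar (x + single_entry r c w) $ k $ j
        = (\<Sum>l\<in>UNIV. lower_block x $ k $ l * (B$l$j - w * B$l$i * B$c$j / (1 + w * B$c$i)))"
      if "w \<in> ball 0 e" for w
      using matrix_inv_add_single_entry[OF AB d[OF that]]
      by (simp add: Phistar_def Inl upper_block_add_single_entry_Inl lower_block_add_single_entry_Inl
          matrix_matrix_mult_def)
    have "(\<lambda>w. \<Sum>l\<in>UNIV. lower_block x $ k $ l * (B$l$j - w * B$l$i * B$c$j / (1 + w * B$c$i)))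
        holomorphic_on ball 0 e"
      using d by (auto intro!: holomorphic_intros)
    then have "(\<lambda>w. Phistar (x + single_entry r c w) $ k $ j) holomorphic_on ball 0 e"
      by (rule holomorphic_transform) (simp add: eq)
    then show ?thesis
      using \<open>e > 0\<close> by blast
  next
    case (Inr i)
    have "Phistar (x + single_entry r c w) = Phistar x + single_entry i c w ** B" for w
      by (simp add: Phistar_def Inr upper_block_add_single_entry_Inr lower_block_add_single_entry_Inr
          matrix_add_rdistrib B_def)
    then have "(\<lambda>w. Phistar (x + single_entry r c w) $ k $ j)
        = (\<lambda>w. Phistar x $ k $ j + (if k = i then w * B$c$j else 0))"
      by (simp add: single_entry_matrix_mult_nth)
    moreover have "(\<lambda>w. Phistar x $ k $ j + (if k = i then w * B$c$j else 0)) holomorphic_on ball 0 1"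
      by (cases "k = i") (simp_all add: holomorphic_intros)
    ultimately have "(\<lambda>w. Phistar (x + single_entry r c w) $ k $ j) holomorphic_on ball 0 1"
      by simp
    then show ?thesis
      using zero_less_one by blast
  qed
qed

lemma cnj_transpose_matrix_mult: "cnj_transpose (A ** B) = cnj_transpose B ** cnj_transpose A"
  by (simp add: cnj_transpose_def matrix_matrix_mult_def vec_eq_iff mult.commute)

lemma cnj_transpose_mat_1: "cnj_transpose (mat 1 :: complex^'n^'n) = mat 1"
  by (simp add: cnj_transpose_def mat_def vec_eq_iff)

lemma invertible_cnj_transpose:
  fixes g :: "complex^'n::finite^'n"
  assumes "invertible g"
  shows "invertible (cnj_transpose g)"
proof -
  have "cnj_transpose (matrix_inv g) ** cnj_transpose g = mat 1"
    using matrix_inv_right[OF assms] by (metis cnj_transpose_matrix_mult cnj_transpose_mat_1)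
  then show ?thesis
    using invertible_left_inverse by blast
qed

lemma upper_block_matrix_mult: "upper_block (Z ** g) = upper_block Z ** g"
  by (simp add: upper_block_def matrix_matrix_mult_def vec_eq_iff)

lemma lower_block_matrix_mult: "lower_block (Z ** g) = lower_block Z ** g"
  by (simp add: lower_block_def matrix_matrix_mult_def vec_eq_iff)

lemma Ustar_matrix_mult:
  fixes Z :: "complex^'p::finite^('p + 'q::finite)"
  assumes "Z \<in> Ustar" and "invertible g"
  shows "Z ** g \<in> Ustar"
proof -
  let ?gram = "\<lambda>Z :: complex^'p^('p + 'q).
    cnj_transpose (upper_block Z) ** upper_block Z + cnj_transpose (lower_block Z) ** lower_block Z"
  have "?gram (Z ** g) = cnj_transpose g ** (?gram Z ** g)"
    by (simp only: upper_block_matrix_mult lower_block_matrix_mult cnj_transpose_matrix_mult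
        matrix_add_ldistrib matrix_add_rdistrib matrix_mul_assoc)
  moreover have "invertible (cnj_transpose g ** (?gram Z ** g))"
    using assms by (intro invertible_mult invertible_cnj_transpose) (simp_all add: Ustar_def)
  ultimately show ?thesis
    by (simp add: Ustar_def)
qed

lemma Vstar_matrix_mult:
  assumes "Z \<in> Vstar" and "invertible g"
  shows "Z ** g \<in> Vstar"
proof -
  have "Z \<in> Ustar" and "det (upper_block Z) \<noteq> 0"
    using assms(1) by (simp_all add: Vstar_def)
  moreover have "det g \<noteq> 0"
    using assms(2) by (simp add: invertible_det_nz)
  ultimately show ?thesis
    using Ustar_matrix_mult[OF _ assms(2)] by (simp add: Vstar_def upper_block_matrix_mult det_mul)
qed

lemma Phistar_matrix_mult:
  assumes "det (upper_block Z) \<noteq> 0" and "invertible g"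
  shows "Phistar (Z ** g) = Phistar Z"
proof -
  have "invertible (upper_block Z)"
    using assms(1) by (simp add: invertible_det_nz)
  then have "Phistar (Z ** g) = (lower_block Z ** g) ** (matrix_inv g ** matrix_inv (upper_block Z))"
    by (simp add: Phistar_def upper_block_matrix_mult lower_block_matrix_mult
        matrix_inv_matrix_mult assms(2))
  also have "\<dots> = lower_block Z ** (g ** matrix_inv g) ** matrix_inv (upper_block Z)"
    by (simp add: matrix_mul_assoc)
  finally show ?thesis
    by (simp add: Phistar_def matrix_inv_right assms(2))
qed

theorem proposition8p1:
  shows "orthogonal_harmonic_family (Vstar :: (complex^'p::finite^('p + 'q::finite)) set)
           {(\<lambda>Z. Phistar Z $ k $ j) | k j. True}
         \<and> (\<forall>k j. GL_invariant (Vstar :: (complex^'p^('p + 'q)) set) (\<lambda>Z. Phistar Z $ k $ j))"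
proof
  let ?V = "Vstar :: (complex^'p^('p + 'q)) set"
  have "holomorphic_along_entries \<phi> Z"
    if "\<phi> \<in> {(\<lambda>Z. Phistar Z $ k $ j) | k j. True}" and "Z \<in> ?V" for \<phi> Z
    using that by (auto intro!: holomorphic_along_entries_Phistar simp: Vstar_def)
  then show "orthogonal_harmonic_family ?V {(\<lambda>Z. Phistar Z $ k $ j) | k j. True}"
    unfolding orthogonal_harmonic_family_def
    by (simp add: tension_eq_0_if_holomorphic_along_entries
        conformality_eq_0_if_holomorphic_along_entries)
  have "Z ** g \<in> ?V \<and> Phistar (Z ** g) = Phistar Z" if "Z \<in> ?V" and "invertible g" for Z g
  proof -
    have "det (upper_block Z) \<noteq> 0"
      using that(1) by (simp add: Vstar_def)
    then show ?thesis
      using Vstar_matrix_mult[OF that] Phistar_matrix_mult[OF _ that(2)] by blast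
  qed
  then show "\<forall>k j. GL_invariant ?V (\<lambda>Z. Phistar Z $ k $ j)"
    unfolding GL_invariant_def by simp
qed

end
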